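(* Assume $1-q\in R^{\times}$. Let $u,u'\in R^{\times}$ and $a,a'\in R$. Then $\mathcal{B}_{(u,a)}\cong\mathcal{B}_{(u',a')}$ as right $H_N^q$-comodule algebras if and only if $a'=a$ and there exists $s\in R^{\times}$ such that $u'=s^Nu$.
   Context: $R$ is a commutative unital ring, $N\ge2$ an integer, and $q\in R$ a root of the $N$-th cyclotomic polynomial over $\mathbb{Z}$. $H_N^q$ is the Taft Hopf algebra over $R$: generated by $g,x$ with $g^N=1$, $x^N=0$, $xg=qgx$, and $\Delta(g)=g\otimes g$, $\Delta(x)=1\otimes x+x\otimes g$, $\varepsilon(g)=1$, $\varepsilon(x)=0$, $S(g)=g^{-1}$, $S(x)=-q^{-1}g^{-1}x$. For $u\in R^{\times}$, $a\in R$, $\mathcal{B}_{(u,a)}$ is the $R$-algebra generated by $v_g,v_x$ subject to $v_g^N=u$, $v_x^N=a$, $v_xv_g=qv_gv_x$; it is a free $R$-module with basis $\{v_g^mv_x^n:0\le m,n<N\}$ and an $H_N^q$-cleft extension of $R$ with right $H_N^q$-comodule algebra structure $v_g\mapsto v_g\otimes g$, $v_x\mapsto 1\otimes x+v_x\otimes g$. *)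

theory Defs
  imports "HOL-Computational_Algebra.Polynomial"
begin

text \<open>Standard recursive definition: X^n - 1 is the product of Phi_d over the divisors d of n.\<close>
function cyclotomic_poly :: "nat \<Rightarrow> int poly" where
  "cyclotomic_poly n =
     (if n = 0 then 1
      else (monom 1 n - 1) div (\<Prod>d\<in>{d\<in>{1..<n}. d dvd n}. cyclotomic_poly d))"
  by auto
termination
  by (relation "measure id") auto

definition is_cyclotomic_root :: "nat \<Rightarrow> 'a::comm_ring_1 \<Rightarrow> bool" where
  "is_cyclotomic_root N q \<longleftrightarrow> poly (map_poly of_int (cyclotomic_poly N)) q = 0"

text \<open>Elements of the free R-module with basis indexed by a type 'i are functions 'i => R.
  B_(u,a) has basis v_g^m v_x^n (m,n < N), indexed by (m,n);
  H_N^q has basis g^i x^j (i,j < N), indexed by (i,j);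
  B (x) H is free with the product basis, indexed by ((m,n),(i,j)).\<close>

definition box :: "nat \<Rightarrow> (nat \<times> nat) set" where
  "box N = {..<N} \<times> {..<N}"

definition bvec :: "nat \<Rightarrow> (nat \<times> nat \<Rightarrow> 'a::comm_ring_1) set" where
  "bvec N = {f. \<forall>p. p \<notin> box N \<longrightarrow> f p = 0}"

definition basis_vec :: "'i \<Rightarrow> 'i \<Rightarrow> 'a::comm_ring_1" where
  "basis_vec p = (\<lambda>r. if r = p then 1 else 0)"

definition vadd :: "('i \<Rightarrow> 'a::comm_ring_1) \<Rightarrow> ('i \<Rightarrow> 'a) \<Rightarrow> 'i \<Rightarrow> 'a" where
  "vadd f h = (\<lambda>r. f r + h r)"

definition vsmult :: "'a::comm_ring_1 \<Rightarrow> ('i \<Rightarrow> 'a) \<Rightarrow> 'i \<Rightarrow> 'a" where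
  "vsmult c f = (\<lambda>r. c * f r)"

text \<open>Product of basis elements of B_(u,a):
  (v_g^m v_x^n)(v_g^k v_x^l) = q^(n k) v_g^(m+k) v_x^(n+l), reduced by v_g^N = u, v_x^N = a.\<close>
definition B_bprod :: "nat \<Rightarrow> 'a::comm_ring_1 \<Rightarrow> 'a \<Rightarrow> 'a \<Rightarrow> nat \<times> nat \<Rightarrow> nat \<times> nat \<Rightarrow> nat \<times> nat \<Rightarrow> 'a" where
  "B_bprod N q u a p p' =
     (case p of (m, n) \<Rightarrow> case p' of (k, l) \<Rightarrow>
       (\<lambda>r. if r = ((m + k) mod N, (n + l) mod N)
            then q ^ (n * k) * (if m + k < N then 1 else u) * (if n + l < N then 1 else a)
            else 0))"

definition B_mul :: "nat \<Rightarrow> 'a::comm_ring_1 \<Rightarrow> 'a \<Rightarrow> 'a \<Rightarrow> (nat \<times> nat \<Rightarrow> 'a) \<Rightarrow> (nat \<times> nat \<Rightarrow> 'a) \<Rightarrow> nat \<times> nat \<Rightarrow> 'a" where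
  "B_mul N q u a f h = (\<lambda>r. \<Sum>p\<in>box N. \<Sum>p'\<in>box N. f p * h p' * B_bprod N q u a p p' r)"

definition B_one :: "nat \<times> nat \<Rightarrow> 'a::comm_ring_1" where
  "B_one = basis_vec (0, 0)"

text \<open>Product of basis elements of the Taft algebra H_N^q:
  (g^i x^j)(g^k x^l) = q^(j k) g^(i+k) x^(j+l), with g^N = 1, x^N = 0.\<close>
definition H_bprod :: "nat \<Rightarrow> 'a::comm_ring_1 \<Rightarrow> nat \<times> nat \<Rightarrow> nat \<times> nat \<Rightarrow> nat \<times> nat \<Rightarrow> 'a" where
  "H_bprod N q h h' =
     (case h of (i, j) \<Rightarrow> case h' of (k, l) \<Rightarrow>
       (\<lambda>s. if j + l < N \<and> s = ((i + k) mod N, j + l) then q ^ (j * k) else 0))"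

text \<open>Tensor product algebra B_(u,a) (x) H_N^q, with (b (x) h)(b' (x) h') = b b' (x) h h'.\<close>
definition T_mul :: "nat \<Rightarrow> 'a::comm_ring_1 \<Rightarrow> 'a \<Rightarrow> 'a \<Rightarrow>
    ((nat \<times> nat) \<times> (nat \<times> nat) \<Rightarrow> 'a) \<Rightarrow> ((nat \<times> nat) \<times> (nat \<times> nat) \<Rightarrow> 'a) \<Rightarrow>
    (nat \<times> nat) \<times> (nat \<times> nat) \<Rightarrow> 'a" where
  "T_mul N q u a S T = (\<lambda>(r, s).
     \<Sum>p\<in>box N. \<Sum>h\<in>box N. \<Sum>p'\<in>box N. \<Sum>h'\<in>box N.
       S (p, h) * T (p', h') * B_bprod N q u a p p' r * H_bprod N q h h' s)"

definition T_one :: "(nat \<times> nat) \<times> (nat \<times> nat) \<Rightarrow> 'a::comm_ring_1" where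
  "T_one = basis_vec ((0, 0), (0, 0))"

fun T_pow :: "nat \<Rightarrow> 'a::comm_ring_1 \<Rightarrow> 'a \<Rightarrow> 'a \<Rightarrow>
    ((nat \<times> nat) \<times> (nat \<times> nat) \<Rightarrow> 'a) \<Rightarrow> nat \<Rightarrow> (nat \<times> nat) \<times> (nat \<times> nat) \<Rightarrow> 'a" where
  "T_pow N q u a T 0 = T_one"
| "T_pow N q u a T (Suc n) = T_mul N q u a T (T_pow N q u a T n)"

text \<open>rho(v_g) = v_g (x) g ;  rho(v_x) = 1 (x) x + v_x (x) g.\<close>
definition rho_g :: "(nat \<times> nat) \<times> (nat \<times> nat) \<Rightarrow> 'a::comm_ring_1" where
  "rho_g = basis_vec ((1, 0), (1, 0))"

definition rho_x :: "(nat \<times> nat) \<times> (nat \<times> nat) \<Rightarrow> 'a::comm_ring_1" where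
  "rho_x = vadd (basis_vec ((0, 0), (0, 1))) (basis_vec ((0, 1), (1, 0)))"

text \<open>The coaction of B_(u,a): the algebra map determined by the generators,
  rho(v_g^m v_x^n) = rho(v_g)^m rho(v_x)^n, extended R-linearly.\<close>
definition coact :: "nat \<Rightarrow> 'a::comm_ring_1 \<Rightarrow> 'a \<Rightarrow> 'a \<Rightarrow> (nat \<times> nat \<Rightarrow> 'a) \<Rightarrow>
    (nat \<times> nat) \<times> (nat \<times> nat) \<Rightarrow> 'a" where
  "coact N q u a f = (\<lambda>t. \<Sum>p\<in>box N. f p *
      T_mul N q u a (T_pow N q u a rho_g (fst p)) (T_pow N q u a rho_x (snd p)) t)"

text \<open>f (x) id on B (x) H for an R-linear map f (given on all of bvec N).\<close>
definition tens_id :: "nat \<Rightarrow> ((nat \<times> nat \<Rightarrow> 'a::comm_ring_1) \<Rightarrow> (nat \<times> nat \<Rightarrow> 'a)) \<Rightarrow>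
    ((nat \<times> nat) \<times> (nat \<times> nat) \<Rightarrow> 'a) \<Rightarrow> (nat \<times> nat) \<times> (nat \<times> nat) \<Rightarrow> 'a" where
  "tens_id N f T = (\<lambda>(r, s). \<Sum>p\<in>box N. T (p, s) * f (basis_vec p) r)"

definition comod_alg_iso :: "nat \<Rightarrow> 'a::comm_ring_1 \<Rightarrow> 'a \<Rightarrow> 'a \<Rightarrow> 'a \<Rightarrow> 'a \<Rightarrow>
    ((nat \<times> nat \<Rightarrow> 'a) \<Rightarrow> (nat \<times> nat \<Rightarrow> 'a)) \<Rightarrow> bool" where
  "comod_alg_iso N q u a u' a' f \<longleftrightarrow>
     bij_betw f (bvec N) (bvec N) \<and>
     (\<forall>x\<in>bvec N. \<forall>y\<in>bvec N. f (vadd x y) = vadd (f x) (f y)) \<and>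
     (\<forall>c. \<forall>x\<in>bvec N. f (vsmult c x) = vsmult c (f x)) \<and>
     (\<forall>x\<in>bvec N. \<forall>y\<in>bvec N. f (B_mul N q u a x y) = B_mul N q u' a' (f x) (f y)) \<and>
     f B_one = B_one \<and>
     (\<forall>x\<in>bvec N. coact N q u' a' (f x) = tens_id N f (coact N q u a x))"

definition comod_alg_isomorphic :: "nat \<Rightarrow> 'a::comm_ring_1 \<Rightarrow> 'a \<Rightarrow> 'a \<Rightarrow> 'a \<Rightarrow> 'a \<Rightarrow> bool" where
  "comod_alg_isomorphic N q u a u' a' \<longleftrightarrow> (\<exists>f. comod_alg_iso N q u a u' a' f)"

end

(*
  An isomorphism f commutes with the coactions, and the coefficient of v_g^m v_x^j in b is
  the component v_g^m (x) g^m x^j of rho(b). As rho(v_g) = v_g (x) g and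
  rho(v_x) = 1 (x) x + v_x (x) g, this forces f(v_g) = d v_g and f(v_x) = v_x + c v_g.
  Comparing the coefficients of v_g^2 in f(v_x v_g) = q f(v_g v_x) gives (1 - q) c d = 0,
  hence c = 0, and applying f to v_g^N = u and v_x^N = a gives u = d^N u' and a = a'.
  Conversely, v_g^m v_x^n |-> t^m v_g^m v_x^n is an isomorphism B_(u,a) -> B_(s^N u,a)
  whenever s t = 1.
*)

theory Submission
  imports Defs
begin

lemma box_iff [simp]: "(m, n) \<in> box N \<longleftrightarrow> m < N \<and> n < N"
  by (simp add: box_def)

lemma finite_box [simp]: "finite (box N)"
  by (simp add: box_def)

lemma sum_eq_single:
  assumes "finite A" "a \<in> A" "\<And>x. x \<in> A \<Longrightarrow> x \<noteq> a \<Longrightarrow> g x = 0"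
  shows "sum g A = g a"
proof -
  have "sum g A = sum g {a}"
    using assms by (intro sum.mono_neutral_right) auto
  then show ?thesis by simp
qed

lemma unit_mult_eq_0_iff:
  fixes c x :: "'a::comm_ring_1"
  assumes "c dvd 1"
  shows "c * x = 0 \<longleftrightarrow> x = 0"
proof
  assume "c * x = 0"
  obtain k where "1 = c * k" using assms by (elim dvdE)
  then have "x = k * (c * x)" by (metis mult.left_commute mult_1_right)
  with \<open>c * x = 0\<close> show "x = 0" by simp
qed simp

section \<open>Multiplication in \<open>B_(u,a)\<close>\<close>

definition v_g :: "nat \<times> nat \<Rightarrow> 'a::comm_ring_1" where
  "v_g = basis_vec (1, 0)"

definition v_x :: "nat \<times> nat \<Rightarrow> 'a::comm_ring_1" where
  "v_x = basis_vec (0, 1)"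

lemma bvec_eqI:
  assumes "x \<in> bvec N" "y \<in> bvec N" "\<And>m n. m < N \<Longrightarrow> n < N \<Longrightarrow> x (m, n) = y (m, n)"
  shows "x = y"
proof
  fix p :: "nat \<times> nat"
  obtain m n where p: "p = (m, n)" by (cases p)
  show "x p = y p"
  proof (cases "m < N \<and> n < N")
    case True
    with p assms(3) show ?thesis by simp
  next
    case False
    with p assms(1,2) show ?thesis by (simp add: bvec_def)
  qed
qed

lemma basis_vec_in_bvec: "p \<in> box N \<Longrightarrow> basis_vec p \<in> bvec N"
  by (auto simp: bvec_def basis_vec_def)

lemma B_one_in_bvec: "N > 0 \<Longrightarrow> B_one \<in> bvec N"
  by (simp add: B_one_def basis_vec_in_bvec)

lemma v_g_in_bvec: "N \<ge> 2 \<Longrightarrow> v_g \<in> bvec N"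
  by (simp add: v_g_def basis_vec_in_bvec)

lemma v_x_in_bvec: "N \<ge> 2 \<Longrightarrow> v_x \<in> bvec N"
  by (simp add: v_x_def basis_vec_in_bvec)

lemma B_bprod_eq_vsmult:
  "B_bprod N q u a (m, n) (k, l) =
     vsmult (q ^ (n * k) * (if m + k < N then 1 else u) * (if n + l < N then 1 else a))
       (basis_vec ((m + k) mod N, (n + l) mod N))"
  by (simp add: B_bprod_def vsmult_def basis_vec_def fun_eq_iff)

lemma B_bprod_eq_0_outside: "N > 0 \<Longrightarrow> r \<notin> box N \<Longrightarrow> B_bprod N q u a p p' r = 0"
  by (cases p; cases p') (auto simp: B_bprod_eq_vsmult vsmult_def basis_vec_def)

lemma B_bprod_neq_0D:
  "B_bprod N q u a p p' r \<noteq> 0 \<Longrightarrow> r = ((fst p + fst p') mod N, (snd p + snd p') mod N)"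
  by (cases p; cases p') (auto simp: B_bprod_def split: if_splits)

lemma B_mul_in_bvec: "N > 0 \<Longrightarrow> B_mul N q u a x y \<in> bvec N"
  by (simp add: bvec_def B_mul_def B_bprod_eq_0_outside)

lemma B_mul_basis_vec:
  assumes "p \<in> box N" "p' \<in> box N"
  shows "B_mul N q u a (basis_vec p) (basis_vec p') = B_bprod N q u a p p'"
proof
  fix r
  have "B_mul N q u a (basis_vec p) (basis_vec p') r =
      (\<Sum>p2\<in>box N. basis_vec p' p2 * B_bprod N q u a p p2 r)"
    unfolding B_mul_def using assms(1) by (subst sum_eq_single[of _ p]) (auto simp: basis_vec_def)
  also have "\<dots> = B_bprod N q u a p p' r"
    using assms(2) by (subst sum_eq_single[of _ p']) (auto simp: basis_vec_def)
  finally show "B_mul N q u a (basis_vec p) (basis_vec p') r = B_bprod N q u a p p' r" .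
qed

lemma B_mul_vadd_left: "B_mul N q u a (vadd x y) z = vadd (B_mul N q u a x z) (B_mul N q u a y z)"
  by (rule ext) (simp add: B_mul_def vadd_def algebra_simps sum.distrib)

lemma B_mul_vadd_right: "B_mul N q u a z (vadd x y) = vadd (B_mul N q u a z x) (B_mul N q u a z y)"
  by (rule ext) (simp add: B_mul_def vadd_def algebra_simps sum.distrib)

lemma B_mul_vsmult_left: "B_mul N q u a (vsmult c x) z = vsmult c (B_mul N q u a x z)"
  by (rule ext) (simp add: B_mul_def vsmult_def sum_distrib_left mult.assoc)

lemma B_mul_vsmult_right: "B_mul N q u a z (vsmult c x) = vsmult c (B_mul N q u a z x)"
  by (rule ext) (simp add: B_mul_def vsmult_def sum_distrib_left algebra_simps)

fun B_pow :: "nat \<Rightarrow> 'a::comm_ring_1 \<Rightarrow> 'a \<Rightarrow> 'a \<Rightarrow> (nat \<times> nat \<Rightarrow> 'a) \<Rightarrow> nat \<Rightarrow>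
    nat \<times> nat \<Rightarrow> 'a" where
  "B_pow N q u a x 0 = B_one"
| "B_pow N q u a x (Suc n) = B_mul N q u a x (B_pow N q u a x n)"

lemma B_pow_in_bvec: "N > 0 \<Longrightarrow> B_pow N q u a x n \<in> bvec N"
  by (cases n) (simp_all add: B_one_in_bvec B_mul_in_bvec)

lemma B_pow_vsmult: "B_pow N q u a (vsmult c x) n = vsmult (c ^ n) (B_pow N q u a x n)"
proof (induction n)
  case 0
  then show ?case by (simp add: vsmult_def)
next
  case (Suc n)
  then show ?case
    by (simp add: B_mul_vsmult_left B_mul_vsmult_right) (simp add: vsmult_def mult_ac)
qed

lemma B_pow_v_g:
  assumes "k < N"
  shows "B_pow N q u a v_g k = basis_vec (k, 0)"
  using assms
proof (induction k)
  case 0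
  then show ?case by (simp add: B_one_def)
next
  case (Suc k)
  then show ?case
    by (simp add: v_g_def B_mul_basis_vec B_bprod_eq_vsmult) (simp add: vsmult_def)
qed

lemma B_pow_v_g_N:
  assumes "N \<ge> 2"
  shows "B_pow N q u a v_g N = vsmult u B_one"
proof -
  have "B_pow N q u a v_g N = B_mul N q u a v_g (B_pow N q u a v_g (N - 1))"
    using assms B_pow.simps(2)[of N q u a v_g "N - 1"] by simp
  also have "\<dots> = B_mul N q u a v_g (basis_vec (N - 1, 0))"
    using assms by (subst B_pow_v_g) auto
  also have "\<dots> = vsmult u B_one"
    using assms by (simp add: v_g_def B_mul_basis_vec B_bprod_eq_vsmult B_one_def)
  finally show ?thesis .
qed

lemma B_pow_v_x:
  assumes "k < N"
  shows "B_pow N q u a v_x k = basis_vec (0, k)"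
  using assms
proof (induction k)
  case 0
  then show ?case by (simp add: B_one_def)
next
  case (Suc k)
  then show ?case
    by (simp add: v_x_def B_mul_basis_vec B_bprod_eq_vsmult) (simp add: vsmult_def)
qed

lemma B_pow_v_x_N:
  assumes "N \<ge> 2"
  shows "B_pow N q u a v_x N = vsmult a B_one"
proof -
  have "B_pow N q u a v_x N = B_mul N q u a v_x (B_pow N q u a v_x (N - 1))"
    using assms B_pow.simps(2)[of N q u a v_x "N - 1"] by simp
  also have "\<dots> = B_mul N q u a v_x (basis_vec (0, N - 1))"
    using assms by (subst B_pow_v_x) auto
  also have "\<dots> = vsmult a B_one"
    using assms by (simp add: v_x_def B_mul_basis_vec B_bprod_eq_vsmult B_one_def)
  finally show ?thesis .
qed

lemma B_mul_v_x_v_g: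
  assumes "N \<ge> 2"
  shows "B_mul N q u a v_x v_g = vsmult q (B_mul N q u a v_g v_x)"
  using assms by (simp add: v_g_def v_x_def B_mul_basis_vec B_bprod_eq_vsmult) (simp add: vsmult_def)

lemma vsmult_B_one_eq_iff: "vsmult c B_one = vsmult c' B_one \<longleftrightarrow> c = c'"
  by (metis B_one_def basis_vec_def mult_1_right vsmult_def)

section \<open>Algebra maps \<open>B_(u,a) \<rightarrow> B_(u',a')\<close>\<close>

definition B_alg_hom :: "nat \<Rightarrow> 'a::comm_ring_1 \<Rightarrow> 'a \<Rightarrow> 'a \<Rightarrow> 'a \<Rightarrow> 'a \<Rightarrow>
    ((nat \<times> nat \<Rightarrow> 'a) \<Rightarrow> (nat \<times> nat \<Rightarrow> 'a)) \<Rightarrow> bool" where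
  "B_alg_hom N q u a u' a' f \<longleftrightarrow>
     (\<forall>x\<in>bvec N. \<forall>y\<in>bvec N. f (B_mul N q u a x y) = B_mul N q u' a' (f x) (f y)) \<and>
     f B_one = B_one \<and>
     (\<forall>c. \<forall>x\<in>bvec N. f (vsmult c x) = vsmult c (f x))"

lemma B_alg_hom_B_pow:
  assumes "N > 0" "B_alg_hom N q u a u' a' f" "x \<in> bvec N"
  shows "f (B_pow N q u a x n) = B_pow N q u' a' (f x) n"
proof (induction n)
  case 0
  then show ?case using assms(2) by (simp add: B_alg_hom_def)
next
  case (Suc n)
  then show ?case using assms by (simp add: B_alg_hom_def B_pow_in_bvec)
qed

lemma B_alg_hom_vsmult_B_one:
  assumes "N > 0" "B_alg_hom N q u a u' a' f"
  shows "f (vsmult c B_one) = vsmult c B_one"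
  using assms by (simp add: B_alg_hom_def B_one_in_bvec)

lemma u_eq_if_B_alg_hom_scales_v_g:
  assumes "N \<ge> 2" "B_alg_hom N q u a u' a' f" "f v_g = vsmult d v_g"
  shows "u = d ^ N * u'"
proof -
  have "vsmult u B_one = f (vsmult u B_one)"
    using B_alg_hom_vsmult_B_one[OF _ assms(2)] assms(1) by simp
  also have "\<dots> = f (B_pow N q u a v_g N)"
    using assms(1) by (simp add: B_pow_v_g_N)
  also have "\<dots> = B_pow N q u' a' (vsmult d v_g) N"
    using assms by (simp add: B_alg_hom_B_pow v_g_in_bvec)
  also have "\<dots> = vsmult (d ^ N * u') B_one"
    using assms(1) by (simp add: B_pow_vsmult B_pow_v_g_N) (simp add: vsmult_def mult.assoc)
  finally show ?thesis by (simp add: vsmult_B_one_eq_iff)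
qed

lemma a_eq_if_B_alg_hom_fixes_v_x:
  assumes "N \<ge> 2" "B_alg_hom N q u a u' a' f" "f v_x = v_x"
  shows "a' = a"
proof -
  have "vsmult a B_one = f (vsmult a B_one)"
    using B_alg_hom_vsmult_B_one[OF _ assms(2)] assms(1) by simp
  also have "\<dots> = f (B_pow N q u a v_x N)"
    using assms(1) by (simp add: B_pow_v_x_N)
  also have "\<dots> = B_pow N q u' a' v_x N"
    using assms by (simp add: B_alg_hom_B_pow v_x_in_bvec)
  also have "\<dots> = vsmult a' B_one"
    using assms(1) by (rule B_pow_v_x_N)
  finally show ?thesis by (simp add: vsmult_B_one_eq_iff)
qed

lemma v_x_shift_eq_0_if_B_alg_hom:
  assumes "N \<ge> 2" "(1 - q) dvd 1" "u' dvd 1" "d dvd 1" "B_alg_hom N q u a u' a' f"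
    and f_v_x: "f v_x = vadd v_x (vsmult c v_g)" and f_v_g: "f v_g = vsmult d v_g"
  shows "c = 0"
proof -
  have "f (B_mul N q u a v_x v_g) = f (vsmult q (B_mul N q u a v_g v_x))"
    using assms(1) by (simp add: B_mul_v_x_v_g)
  then have rel: "B_mul N q u' a' (vadd v_x (vsmult c v_g)) (vsmult d v_g) =
      vsmult q (B_mul N q u' a' (vsmult d v_g) (vadd v_x (vsmult c v_g)))"
    using assms(1,5) f_v_x f_v_g by (simp add: B_alg_hom_def B_mul_in_bvec v_g_in_bvec v_x_in_bvec)
  define w where "w = (if 2 < N then 1 else u')"
  \<comment> \<open>in \<open>B_(u',a')\<close>, \<open>v_g\<^sup>2 = w \<cdot> basis_vec (2 mod N, 0)\<close>: compare coefficients there\<close>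
  have "B_mul N q u' a' (vadd v_x (vsmult c v_g)) (vsmult d v_g) (2 mod N, 0) = c * d * w"
    and "B_mul N q u' a' (vsmult d v_g) (vadd v_x (vsmult c v_g)) (2 mod N, 0) = c * d * w"
    using assms(1)
    by (simp_all add: B_mul_vadd_left B_mul_vadd_right B_mul_vsmult_left B_mul_vsmult_right
        v_g_def v_x_def B_mul_basis_vec B_bprod_eq_vsmult)
      (auto simp: vadd_def vsmult_def basis_vec_def w_def mult_ac numeral_2_eq_2)
  with rel have "c * d * w = q * (c * d * w)"
    by (metis vsmult_def)
  then have "(1 - q) * ((d * w) * c) = 0"
    by (metis eq_iff_diff_eq_0 left_diff_distrib mult_1_left mult.commute mult.assoc)
  moreover have "(d * w) dvd 1"
    using assms(3,4) mult_dvd_mono[of d 1 u' 1] by (simp add: w_def)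
  ultimately show "c = 0"
    using assms(2) by (simp add: unit_mult_eq_0_iff)
qed

section \<open>The coaction\<close>

lemma sum_sum_basis_vec:
  assumes "p0 \<in> box N" "h0 \<in> box N"
  shows "(\<Sum>p\<in>box N. \<Sum>h\<in>box N. basis_vec (p0, h0) (p, h) * G p h) = G p0 h0"
proof -
  have "(\<Sum>p\<in>box N. \<Sum>h\<in>box N. basis_vec (p0, h0) (p, h) * G p h) =
      (\<Sum>h\<in>box N. basis_vec (p0, h0) (p0, h) * G p0 h)"
    using assms by (intro sum_eq_single) (auto simp: basis_vec_def)
  also have "\<dots> = G p0 h0"
    using assms by (subst sum_eq_single[of _ h0]) (auto simp: basis_vec_def)
  finally show ?thesis .
qed

lemma T_mul_basis_vec_left:
  assumes "p0 \<in> box N" "h0 \<in> box N"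
  shows "T_mul N q u a (basis_vec (p0, h0)) T (r, s) =
    (\<Sum>p'\<in>box N. \<Sum>h'\<in>box N. T (p', h') * (B_bprod N q u a p0 p' r * H_bprod N q h0 h' s))"
  unfolding T_mul_def
  using sum_sum_basis_vec[OF assms, of "\<lambda>p h. \<Sum>p'\<in>box N. \<Sum>h'\<in>box N.
      T (p', h') * (B_bprod N q u a p p' r * H_bprod N q h h' s)"]
  by (simp add: sum_distrib_left mult_ac)

lemma T_mul_basis_vec_right:
  assumes "p0 \<in> box N" "h0 \<in> box N"
  shows "T_mul N q u a S (basis_vec (p0, h0)) (r, s) =
    (\<Sum>p\<in>box N. \<Sum>h\<in>box N. S (p, h) * (B_bprod N q u a p p0 r * H_bprod N q h h0 s))"
  unfolding T_mul_def case_prod_conv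
proof (intro sum.cong refl)
  fix p h
  show "(\<Sum>p'\<in>box N. \<Sum>h'\<in>box N.
      S (p, h) * basis_vec (p0, h0) (p', h') * B_bprod N q u a p p' r * H_bprod N q h h' s) =
    S (p, h) * (B_bprod N q u a p p0 r * H_bprod N q h h0 s)"
    using sum_sum_basis_vec[OF assms, of "\<lambda>p' h'.
        S (p, h) * (B_bprod N q u a p p' r * H_bprod N q h h' s)"]
    by (simp add: mult_ac)
qed

lemma T_mul_vadd_left: "T_mul N q u a (vadd S1 S2) T = vadd (T_mul N q u a S1 T) (T_mul N q u a S2 T)"
  by (rule ext) (auto simp: T_mul_def vadd_def algebra_simps sum.distrib)

lemma T_mul_vsmult_left: "T_mul N q u a (vsmult c S) T = vsmult c (T_mul N q u a S T)"
  by (rule ext) (auto simp: T_mul_def vsmult_def sum_distrib_left algebra_simps)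

lemma T_mul_vsmult_right: "T_mul N q u a S (vsmult c T) = vsmult c (T_mul N q u a S T)"
  by (rule ext) (auto simp: T_mul_def vsmult_def sum_distrib_left algebra_simps)

definition tvec :: "nat \<Rightarrow> ((nat \<times> nat) \<times> (nat \<times> nat) \<Rightarrow> 'a::comm_ring_1) set" where
  "tvec N = {W. \<forall>r s. r \<notin> box N \<or> s \<notin> box N \<longrightarrow> W (r, s) = 0}"

lemma tvec_eq_0: "W \<in> tvec N \<Longrightarrow> r \<notin> box N \<or> s \<notin> box N \<Longrightarrow> W (r, s) = 0"
  unfolding tvec_def by blast

lemma basis_vec_in_tvec: "p \<in> box N \<Longrightarrow> h \<in> box N \<Longrightarrow> basis_vec (p, h) \<in> tvec N"
  by (auto simp: tvec_def basis_vec_def)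

lemma rho_x_in_tvec: "N \<ge> 2 \<Longrightarrow> rho_x \<in> tvec N"
  by (auto simp: tvec_def rho_x_def vadd_def basis_vec_def)

lemma H_bprod_eq_0_outside: "s \<notin> box N \<Longrightarrow> H_bprod N q h h' s = 0"
  by (cases h; cases h') (auto simp: H_bprod_def)

lemma T_mul_eq_0_outside:
  assumes "N > 0" "r \<notin> box N \<or> s \<notin> box N"
  shows "T_mul N q u a S T (r, s) = 0"
  using assms by (auto simp: T_mul_def B_bprod_eq_0_outside H_bprod_eq_0_outside)

lemma B_bprod_one_left: "p \<in> box N \<Longrightarrow> B_bprod N q u a (0, 0) p = basis_vec p"
  by (cases p) (simp add: B_bprod_eq_vsmult vsmult_def)

lemma B_bprod_one_right: "p \<in> box N \<Longrightarrow> B_bprod N q u a p (0, 0) = basis_vec p"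
  by (cases p) (simp add: B_bprod_eq_vsmult vsmult_def)

lemma H_bprod_one_left: "h \<in> box N \<Longrightarrow> H_bprod N q (0, 0) h = basis_vec h"
  by (cases h) (auto simp: H_bprod_def basis_vec_def)

lemma H_bprod_one_right: "h \<in> box N \<Longrightarrow> H_bprod N q h (0, 0) = basis_vec h"
  by (cases h) (auto simp: H_bprod_def basis_vec_def)

lemma sum_sum_basis_vec_swap:
  assumes "W \<in> tvec N"
  shows "(\<Sum>p\<in>box N. \<Sum>h\<in>box N. W (p, h) * (basis_vec p r * basis_vec h s)) = W (r, s)"
proof (cases "r \<in> box N \<and> s \<in> box N")
  case True
  have "W (p, h) * (basis_vec p r * basis_vec h s) = basis_vec (r, s) (p, h) * W (p, h)" for p h
    by (simp add: basis_vec_def)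
  then show ?thesis
    using True sum_sum_basis_vec[of r N s "\<lambda>p h. W (p, h)"] by simp
next
  case False
  then have "W (r, s) = 0" using assms tvec_eq_0 by blast
  moreover have "(\<Sum>p\<in>box N. \<Sum>h\<in>box N. W (p, h) * (basis_vec p r * basis_vec h s)) = 0"
    using False by (intro sum.neutral ballI) (auto simp: basis_vec_def)
  ultimately show ?thesis by simp
qed

lemma T_one_mul: "N > 0 \<Longrightarrow> W \<in> tvec N \<Longrightarrow> T_mul N q u a T_one W = W"
  by (auto simp: T_one_def T_mul_basis_vec_left B_bprod_one_left H_bprod_one_left
      sum_sum_basis_vec_swap intro!: ext)

lemma T_mul_one: "N > 0 \<Longrightarrow> W \<in> tvec N \<Longrightarrow> T_mul N q u a W T_one = W"
  by (auto simp: T_one_def T_mul_basis_vec_right B_bprod_one_right H_bprod_one_right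
      sum_sum_basis_vec_swap intro!: ext)

lemma T_pow_rho_g:
  assumes "m < N"
  shows "T_pow N q u a rho_g m = basis_vec ((m, 0), (m, 0))"
  using assms
proof (induction m)
  case 0
  then show ?case by (simp add: T_one_def)
next
  case (Suc m)
  show ?case
  proof
    fix t :: "(nat \<times> nat) \<times> (nat \<times> nat)"
    obtain r s where t: "t = (r, s)" by (cases t)
    have "T_pow N q u a rho_g (Suc m) (r, s) =
        T_mul N q u a (basis_vec ((1, 0), (1, 0))) (basis_vec ((m, 0), (m, 0))) (r, s)"
      using Suc by (simp add: rho_g_def)
    also have "\<dots> = B_bprod N q u a (1, 0) (m, 0) r * H_bprod N q (1, 0) (m, 0) s"
      using Suc.prems sum_sum_basis_vec[of "(m, 0)" N "(m, 0)"]
      by (simp add: T_mul_basis_vec_left)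
    also have "\<dots> = basis_vec ((Suc m, 0), (Suc m, 0)) (r, s)"
      using Suc.prems by (auto simp: B_bprod_def H_bprod_def basis_vec_def)
    finally show "T_pow N q u a rho_g (Suc m) t = basis_vec ((Suc m, 0), (Suc m, 0)) t"
      using t by simp
  qed
qed

lemma T_pow_rho_x_Suc:
  "N \<ge> 2 \<Longrightarrow> T_pow N q u a rho_x (Suc n) (r, s) =
     (\<Sum>p'\<in>box N. \<Sum>h'\<in>box N.
        T_pow N q u a rho_x n (p', h') * (B_bprod N q u a (0, 0) p' r * H_bprod N q (0, 1) h' s))
   + (\<Sum>p'\<in>box N. \<Sum>h'\<in>box N.
        T_pow N q u a rho_x n (p', h') * (B_bprod N q u a (0, 1) p' r * H_bprod N q (1, 0) h' s))"
  by (simp only: T_pow.simps rho_x_def T_mul_vadd_left) (simp add: vadd_def T_mul_basis_vec_left)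

lemma T_pow_rho_x_eq_0_above_degree:
  assumes "N \<ge> 2" "n < N" "n < snd b"
  shows "T_pow N q u a rho_x n (b, h) = 0"
  using assms(2,3)
proof (induction n arbitrary: b h)
  case 0
  then show ?case by (auto simp: T_one_def basis_vec_def)
next
  case (Suc n)
  have summand_eq_0: "T_pow N q u a rho_x n (p', h') * (B_bprod N q u a e p' b * H) = 0"
    if "snd e \<le> 1" for p' h' e H
  proof (cases "B_bprod N q u a e p' b = 0")
    case False
    then have "snd b \<le> snd e + snd p'"
      by (auto dest!: B_bprod_neq_0D intro: mod_less_eq_dividend)
    then have "n < snd p'" using that Suc.prems(2) by simp
    then show ?thesis using Suc.IH Suc.prems(1) by simp
  qed simp
  show ?case
    unfolding T_pow_rho_x_Suc[OF assms(1)] by (simp add: summand_eq_0)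
qed

lemma T_pow_rho_x_at_v_x_degree_0:
  assumes "N \<ge> 2" "n < N" "k < N"
  shows "T_pow N q u a rho_x n ((k, 0), (h1, j)) = (if k = 0 \<and> h1 = 0 \<and> j = n then 1 else 0)"
  using assms(2)
proof (induction n arbitrary: h1 j)
  case 0
  then show ?case by (auto simp: T_one_def basis_vec_def)
next
  case (Suc n)
  let ?W = "T_pow N q u a rho_x n"
  have IH: "?W ((k, 0), h') = (if k = 0 then basis_vec (0, n) h' else 0)" for h'
    using Suc by (cases h') (auto simp: basis_vec_def)
  \<comment> \<open>the summand of \<open>v_x \<otimes> g\<close> only returns to v_x-degree 0 from degree \<open>N - 1 > n\<close>\<close>
  have "?W (p', h') * (B_bprod N q u a (0, 1) p' (k, 0) * H_bprod N q (1, 0) h' (h1, j)) = 0"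
    if "p' \<in> box N" for p' h'
  proof (cases "B_bprod N q u a (0, 1) p' (k, 0) = 0")
    case False
    then have "(1 + snd p') mod N = 0" by (auto dest: B_bprod_neq_0D)
    moreover have "snd p' < N" using that by (cases p') simp
    ultimately have "snd p' = N - 1"
      by (cases "1 + snd p' < N") auto
    then have "?W (p', h') = 0"
      using Suc.prems by (intro T_pow_rho_x_eq_0_above_degree[OF assms(1)]) simp_all
    then show ?thesis by simp
  qed simp
  then have v_x_term: "(\<Sum>p'\<in>box N. \<Sum>h'\<in>box N.
      ?W (p', h') * (B_bprod N q u a (0, 1) p' (k, 0) * H_bprod N q (1, 0) h' (h1, j))) = 0"
    by (simp add: sum.neutral)
  have "(\<Sum>p'\<in>box N. \<Sum>h'\<in>box N.
      ?W (p', h') * (B_bprod N q u a (0, 0) p' (k, 0) * H_bprod N q (0, 1) h' (h1, j))) =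
      (\<Sum>h'\<in>box N. ?W ((k, 0), h') * H_bprod N q (0, 1) h' (h1, j))"
    using assms(3) by (subst sum_eq_single[of _ "(k, 0)"]) (auto simp: B_bprod_one_left basis_vec_def)
  also have "\<dots> =
      (\<Sum>h'\<in>box N. (if k = 0 then basis_vec (0, n) h' else 0) * H_bprod N q (0, 1) h' (h1, j))"
    by (simp add: IH)
  also have "\<dots> = (if k = 0 then H_bprod N q (0, 1) (0, n) (h1, j) else 0)"
    using Suc.prems by (subst sum_eq_single[of _ "(0, n)"]) (auto simp: basis_vec_def)
  also have "\<dots> = (if k = 0 \<and> h1 = 0 \<and> j = Suc n then 1 else 0)"
    using Suc.prems by (auto simp: H_bprod_def)
  finally show ?case
    unfolding T_pow_rho_x_Suc[OF assms(1)] v_x_term by simp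
qed

lemma T_mul_rho_pow_diagonal:
  assumes "N \<ge> 2" "m' < N" "n < N" "m < N" "j < N"
  shows "T_mul N q u a (T_pow N q u a rho_g m') (T_pow N q u a rho_x n) ((m, 0), (m, j)) =
    (if m' = m \<and> n = j then 1 else 0)"
proof -
  let ?W = "T_pow N q u a rho_x n"
  have summand: "?W (p', h') * B_bprod N q u a (m', 0) p' (m, 0) =
      basis_vec ((0, 0), (0, n)) (p', h') * B_bprod N q u a (m', 0) (0, 0) (m, 0)"
    if p'_box: "p' \<in> box N" for p' h'
  proof (cases "B_bprod N q u a (m', 0) p' (m, 0) = 0")
    case False
    obtain k l where p': "p' = (k, l)" "k < N" "l < N" using p'_box by (cases p') simp
    with False have "l = 0" by (auto dest: B_bprod_neq_0D)
    then show ?thesis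
      using p' assms(1,3) by (cases h') (auto simp: T_pow_rho_x_at_v_x_degree_0 basis_vec_def)
  next
    case True
    then show ?thesis
      using p'_box assms(1,3) by (cases p', cases h') (auto simp: T_pow_rho_x_at_v_x_degree_0 basis_vec_def)
  qed
  have "T_mul N q u a (T_pow N q u a rho_g m') ?W ((m, 0), (m, j)) =
      (\<Sum>p'\<in>box N. \<Sum>h'\<in>box N.
         basis_vec ((0, 0), (0, n)) (p', h') *
           (B_bprod N q u a (m', 0) (0, 0) (m, 0) * H_bprod N q (m', 0) h' (m, j)))"
    using assms summand by (simp add: T_pow_rho_g T_mul_basis_vec_left mult.assoc[symmetric])
  also have "\<dots> = B_bprod N q u a (m', 0) (0, 0) (m, 0) * H_bprod N q (m', 0) (0, n) (m, j)"
    using assms by (simp add: sum_sum_basis_vec)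
  also have "\<dots> = (if m' = m \<and> n = j then 1 else 0)"
    using assms by (auto simp: B_bprod_def H_bprod_def)
  finally show ?thesis .
qed

lemma coact_diagonal:
  assumes "N \<ge> 2" "m < N" "j < N"
  shows "coact N q u a x ((m, 0), (m, j)) = x (m, j)"
  unfolding coact_def using assms
  by (subst sum_eq_single[of _ "(m, j)"]) (auto simp: T_mul_rho_pow_diagonal split: if_splits)

lemma coact_basis_vec:
  assumes "p \<in> box N"
  shows "coact N q u a (basis_vec p) =
    T_mul N q u a (T_pow N q u a rho_g (fst p)) (T_pow N q u a rho_x (snd p))"
  unfolding coact_def using assms
  by (subst sum_eq_single[of _ p]) (auto simp: basis_vec_def)

lemma coact_v_x: "N \<ge> 2 \<Longrightarrow> coact N q u a v_x = rho_x"
  by (simp add: v_x_def coact_basis_vec T_one_mul T_mul_one rho_x_in_tvec)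

lemma coact_v_g: "N \<ge> 2 \<Longrightarrow> coact N q u a v_g = rho_g"
  by (simp add: v_g_def coact_basis_vec T_one_mul T_mul_one rho_g_def basis_vec_in_tvec)

lemma tens_id_rho_x:
  assumes "N \<ge> 2"
  shows "tens_id N f rho_x (r, s) =
    (if s = (0, 1) then f B_one r else 0) + (if s = (1, 0) then f v_x r else 0)"
  using assms
  by (simp add: tens_id_def rho_x_def vadd_def basis_vec_def B_one_def v_x_def distrib_right
      sum.distrib if_distrib[of "\<lambda>c. c * _"] cong: if_cong)

lemma tens_id_rho_g:
  assumes "N \<ge> 2"
  shows "tens_id N f rho_g (r, s) = (if s = (1, 0) then f v_g r else 0)"
  using assms
  by (simp add: tens_id_def rho_g_def basis_vec_def v_g_def if_distrib[of "\<lambda>c. c * _"]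
      cong: if_cong)

section \<open>Comodule algebra isomorphisms\<close>

lemma comod_alg_iso_imp_B_alg_hom:
  "comod_alg_iso N q u a u' a' f \<Longrightarrow> B_alg_hom N q u a u' a' f"
  by (simp add: comod_alg_iso_def B_alg_hom_def)

lemma comod_alg_iso_apply_diagonal:
  assumes "N \<ge> 2" "comod_alg_iso N q u a u' a' f" "x \<in> bvec N" "m < N" "j < N"
  shows "f x (m, j) = tens_id N f (coact N q u a x) ((m, 0), (m, j))"
proof -
  have "f x (m, j) = coact N q u' a' (f x) ((m, 0), (m, j))"
    using assms(1,4,5) by (simp add: coact_diagonal)
  also have "\<dots> = tens_id N f (coact N q u a x) ((m, 0), (m, j))"
    using assms(2,3) by (simp add: comod_alg_iso_def)
  finally show ?thesis .
qed

lemma comod_alg_iso_in_bvec: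
  "comod_alg_iso N q u a u' a' f \<Longrightarrow> x \<in> bvec N \<Longrightarrow> f x \<in> bvec N"
  unfolding comod_alg_iso_def by (blast dest: bij_betw_apply)

lemma comod_alg_iso_v_x:
  assumes "N \<ge> 2" "comod_alg_iso N q u a u' a' f"
  shows "f v_x = vadd v_x (vsmult (f v_x (1, 0)) v_g)"
proof (rule bvec_eqI)
  show "f v_x \<in> bvec N"
    using assms by (simp add: comod_alg_iso_in_bvec v_x_in_bvec)
  show "vadd v_x (vsmult (f v_x (1, 0)) v_g) \<in> bvec N"
    using assms(1) by (auto simp: bvec_def vadd_def vsmult_def v_x_def v_g_def basis_vec_def)
  fix m j
  assume mj: "m < N" "j < N"
  have "f v_x (m, j) = tens_id N f rho_x ((m, 0), (m, j))"
    using comod_alg_iso_apply_diagonal[OF assms v_x_in_bvec[OF assms(1)] mj] assms(1)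
    by (simp add: coact_v_x)
  also have "\<dots> = vadd v_x (vsmult (f v_x (1, 0)) v_g) (m, j)"
    using assms by (simp add: tens_id_rho_x)
      (auto simp: comod_alg_iso_def vadd_def vsmult_def v_x_def v_g_def B_one_def basis_vec_def)
  finally show "f v_x (m, j) = vadd v_x (vsmult (f v_x (1, 0)) v_g) (m, j)" .
qed

lemma comod_alg_iso_v_g:
  assumes "N \<ge> 2" "comod_alg_iso N q u a u' a' f"
  shows "f v_g = vsmult (f v_g (1, 0)) v_g"
proof (rule bvec_eqI)
  show "f v_g \<in> bvec N"
    using assms by (simp add: comod_alg_iso_in_bvec v_g_in_bvec)
  show "vsmult (f v_g (1, 0)) v_g \<in> bvec N"
    using assms(1) by (auto simp: bvec_def vsmult_def v_g_def basis_vec_def)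
  fix m j
  assume mj: "m < N" "j < N"
  have "f v_g (m, j) = tens_id N f rho_g ((m, 0), (m, j))"
    using comod_alg_iso_apply_diagonal[OF assms v_g_in_bvec[OF assms(1)] mj] assms(1)
    by (simp add: coact_v_g)
  also have "\<dots> = vsmult (f v_g (1, 0)) v_g (m, j)"
    using assms(1) by (simp add: tens_id_rho_g) (auto simp: vsmult_def v_g_def basis_vec_def)
  finally show "f v_g (m, j) = vsmult (f v_g (1, 0)) v_g (m, j)" .
qed

lemma comod_alg_iso_imp_parameters:
  assumes "N \<ge> 2" "(1 - q) dvd 1" "u dvd 1" "u' dvd 1" "comod_alg_iso N q u a u' a' f"
  shows "a' = a \<and> (\<exists>s. s dvd 1 \<and> u' = s ^ N * u)"
proof -
  define c d where "c = f v_x (1, 0)" and "d = f v_g (1, 0)"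
  have hom: "B_alg_hom N q u a u' a' f"
    using assms(5) by (rule comod_alg_iso_imp_B_alg_hom)
  have f_v_g: "f v_g = vsmult d v_g"
    unfolding d_def using assms(1,5) by (rule comod_alg_iso_v_g)
  have f_v_x: "f v_x = vadd v_x (vsmult c v_g)"
    unfolding c_def using assms(1,5) by (rule comod_alg_iso_v_x)
  have u_eq: "u = d ^ N * u'"
    using assms(1) hom f_v_g by (rule u_eq_if_B_alg_hom_scales_v_g)
  have "d dvd u"
    using assms(1) by (simp add: u_eq)
  then have d_unit: "d dvd 1"
    using assms(3) by (rule dvd_trans)
  have "c = 0"
    using assms(1,2,4) d_unit hom f_v_x f_v_g by (rule v_x_shift_eq_0_if_B_alg_hom)
  then have "f v_x = v_x"
    using f_v_x by (simp add: vadd_def vsmult_def)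
  with assms(1) hom have "a' = a"
    by (rule a_eq_if_B_alg_hom_fixes_v_x)
  moreover obtain e where e: "1 = d * e"
    using d_unit by (elim dvdE)
  then have "u' = e ^ N * u"
    by (simp add: u_eq power_mult_distrib[symmetric] mult.assoc[symmetric] mult.commute[of e])
  moreover have "e dvd 1"
    using e by (metis dvd_triv_right)
  ultimately show ?thesis by blast
qed

section \<open>Rescaling \<open>v_g\<close>\<close>

definition rescale_v_g :: "'a::comm_ring_1 \<Rightarrow> (nat \<times> nat \<Rightarrow> 'a) \<Rightarrow> nat \<times> nat \<Rightarrow> 'a" where
  "rescale_v_g t x = (\<lambda>r. t ^ fst r * x r)"

text \<open>\<open>rescale_v_g_tensor t\<close> is \<open>rescale_v_g t \<otimes> id\<close> on \<open>B_(u,a) \<otimes> H\<^sub>N\<^sup>q\<close>.\<close>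

definition rescale_v_g_tensor ::
    "'a::comm_ring_1 \<Rightarrow> ((nat \<times> nat) \<times> (nat \<times> nat) \<Rightarrow> 'a) \<Rightarrow>
      (nat \<times> nat) \<times> (nat \<times> nat) \<Rightarrow> 'a" where
  "rescale_v_g_tensor t W = (\<lambda>(r, s). t ^ fst r * W (r, s))"

lemma B_bprod_rescale:
  assumes "t ^ N * u' = u" "p \<in> box N" "p' \<in> box N"
  shows "t ^ fst r * B_bprod N q u a p p' r = t ^ fst p * t ^ fst p' * B_bprod N q u' a p p' r"
proof -
  obtain m n k l where p: "p = (m, n)" "p' = (k, l)" "m < N" "k < N"
    using assms(2,3) by (cases p; cases p') simp
  have "t ^ ((m + k) mod N) * (if m + k < N then 1 else u) =
      t ^ m * t ^ k * (if m + k < N then 1 else u')"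
  proof (cases "m + k < N")
    case False
    then have "m + k = (m + k) mod N + N"
      using p(3,4) by (simp add: le_mod_geq)
    then have "t ^ m * t ^ k = t ^ ((m + k) mod N) * t ^ N"
      by (metis power_add)
    then show ?thesis
      using False assms(1) by (simp add: mult.assoc)
  qed (simp add: power_add)
  then show ?thesis
    using p by (auto simp: B_bprod_def mult_ac)
qed

lemma rescale_v_g_B_mul:
  assumes "t ^ N * u' = u"
  shows "rescale_v_g t (B_mul N q u a x y) = B_mul N q u' a (rescale_v_g t x) (rescale_v_g t y)"
proof
  fix r
  have "rescale_v_g t (B_mul N q u a x y) r =
      (\<Sum>p\<in>box N. \<Sum>p'\<in>box N. x p * y p' * (t ^ fst r * B_bprod N q u a p p' r))"
    by (simp add: rescale_v_g_def B_mul_def sum_distrib_left mult_ac)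
  also have "\<dots> = (\<Sum>p\<in>box N. \<Sum>p'\<in>box N.
      x p * y p' * (t ^ fst p * t ^ fst p' * B_bprod N q u' a p p' r))"
    using assms by (simp add: B_bprod_rescale)
  also have "\<dots> = B_mul N q u' a (rescale_v_g t x) (rescale_v_g t y) r"
    by (simp add: rescale_v_g_def B_mul_def mult_ac)
  finally show "rescale_v_g t (B_mul N q u a x y) r =
      B_mul N q u' a (rescale_v_g t x) (rescale_v_g t y) r" .
qed

lemma rescale_v_g_tensor_T_mul:
  assumes "t ^ N * u' = u"
  shows "rescale_v_g_tensor t (T_mul N q u a S T) =
    T_mul N q u' a (rescale_v_g_tensor t S) (rescale_v_g_tensor t T)"
proof
  fix x :: "(nat \<times> nat) \<times> (nat \<times> nat)"
  obtain r s where x: "x = (r, s)" by (cases x)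
  have "rescale_v_g_tensor t (T_mul N q u a S T) (r, s) =
      (\<Sum>p\<in>box N. \<Sum>h\<in>box N. \<Sum>p'\<in>box N. \<Sum>h'\<in>box N.
         S (p, h) * T (p', h') * H_bprod N q h h' s * (t ^ fst r * B_bprod N q u a p p' r))"
    by (simp add: rescale_v_g_tensor_def T_mul_def sum_distrib_left mult_ac)
  also have "\<dots> = (\<Sum>p\<in>box N. \<Sum>h\<in>box N. \<Sum>p'\<in>box N. \<Sum>h'\<in>box N.
       S (p, h) * T (p', h') * H_bprod N q h h' s * (t ^ fst p * t ^ fst p' * B_bprod N q u' a p p' r))"
    using assms by (simp add: B_bprod_rescale)
  also have "\<dots> = T_mul N q u' a (rescale_v_g_tensor t S) (rescale_v_g_tensor t T) (r, s)"
    by (simp add: rescale_v_g_tensor_def T_mul_def mult_ac)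
  finally show "rescale_v_g_tensor t (T_mul N q u a S T) x =
      T_mul N q u' a (rescale_v_g_tensor t S) (rescale_v_g_tensor t T) x"
    using x by simp
qed

lemma rescale_v_g_tensor_T_pow:
  assumes "t ^ N * u' = u"
  shows "rescale_v_g_tensor t (T_pow N q u a W m) = T_pow N q u' a (rescale_v_g_tensor t W) m"
proof (induction m)
  case 0
  then show ?case by (auto simp: rescale_v_g_tensor_def T_one_def basis_vec_def)
next
  case (Suc m)
  then show ?case by (simp add: rescale_v_g_tensor_T_mul[OF assms])
qed

lemma T_pow_vsmult: "T_pow N q u a (vsmult c W) m = vsmult (c ^ m) (T_pow N q u a W m)"
proof (induction m)
  case 0
  then show ?case by (simp add: vsmult_def)
next
  case (Suc m)
  then show ?case
    by (simp add: T_mul_vsmult_left T_mul_vsmult_right) (simp add: vsmult_def mult_ac)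
qed

lemma rescale_v_g_tensor_rho_g: "rescale_v_g_tensor t rho_g = vsmult t rho_g"
  by (auto simp: rescale_v_g_tensor_def rho_g_def vsmult_def basis_vec_def)

lemma rescale_v_g_tensor_rho_x: "rescale_v_g_tensor t rho_x = rho_x"
  by (auto simp: rescale_v_g_tensor_def rho_x_def vadd_def basis_vec_def)

lemma tens_id_rescale_v_g:
  "tens_id N (rescale_v_g t) W (r, h) = (if r \<in> box N then t ^ fst r * W (r, h) else 0)"
  by (simp add: tens_id_def rescale_v_g_def basis_vec_def if_distrib[of "\<lambda>c. _ * c"] mult.commute
      cong: if_cong)

lemma coact_rescale_v_g:
  assumes "N > 0" "t ^ N * u' = u"
  shows "coact N q u' a (rescale_v_g t x) = tens_id N (rescale_v_g t) (coact N q u a x)"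
proof
  fix y :: "(nat \<times> nat) \<times> (nat \<times> nat)"
  obtain r h where y: "y = (r, h)" by (cases y)
  let ?M = "\<lambda>u p. T_mul N q u a (T_pow N q u a rho_g (fst p)) (T_pow N q u a rho_x (snd p))"
  have rescale_M: "rescale_v_g_tensor t (?M u p) = vsmult (t ^ fst p) (?M u' p)" for p
    by (simp add: rescale_v_g_tensor_T_mul[OF assms(2)] rescale_v_g_tensor_T_pow[OF assms(2)]
        rescale_v_g_tensor_rho_g rescale_v_g_tensor_rho_x T_pow_vsmult T_mul_vsmult_left)
  show "coact N q u' a (rescale_v_g t x) y = tens_id N (rescale_v_g t) (coact N q u a x) y"
  proof (cases "r \<in> box N")
    case False
    then show ?thesis
      using y assms(1) by (simp add: tens_id_rescale_v_g coact_def T_mul_eq_0_outside)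
  next
    case True
    have "t ^ fst r * coact N q u a x (r, h) =
        (\<Sum>p\<in>box N. x p * rescale_v_g_tensor t (?M u p) (r, h))"
      by (simp add: coact_def rescale_v_g_tensor_def sum_distrib_left mult_ac)
    also have "\<dots> = coact N q u' a (rescale_v_g t x) (r, h)"
      by (simp add: rescale_M coact_def rescale_v_g_def vsmult_def mult_ac)
    finally show ?thesis
      using y True by (simp add: tens_id_rescale_v_g)
  qed
qed

lemma rescale_v_g_comod_alg_iso:
  assumes "N > 0" "s * t = 1" "u' = s ^ N * u"
  shows "comod_alg_iso N q u a u' a (rescale_v_g t)"
proof -
  have "t ^ N * u' = (s * t) ^ N * u"
    by (simp add: assms(3) power_mult_distrib mult_ac)
  then have t_u': "t ^ N * u' = u"
    using assms(2) by simp
  have inverse: "rescale_v_g s (rescale_v_g t x) = x" "rescale_v_g t (rescale_v_g s x) = x" for x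
    using assms(2) by (simp_all add: rescale_v_g_def mult.assoc[symmetric] power_mult_distrib[symmetric]
        mult.commute[of t])
  have "rescale_v_g c x \<in> bvec N" if "x \<in> bvec N" for c and x :: "nat \<times> nat \<Rightarrow> 'a"
    using that by (auto simp: bvec_def rescale_v_g_def)
  then have "bij_betw (rescale_v_g t) (bvec N) (bvec N)"
    using inverse by (intro bij_betw_byWitness[where f' = "rescale_v_g s"]) auto
  then show ?thesis
    unfolding comod_alg_iso_def
    using rescale_v_g_B_mul[OF t_u'] coact_rescale_v_g[OF assms(1) t_u']
    by (auto simp: rescale_v_g_def vadd_def vsmult_def B_one_def basis_vec_def distrib_left
        mult.left_commute)
qed

theorem proposition1p7:
  fixes q u a u' a' :: "'a::comm_ring_1" and N :: nat
  assumes "N \<ge> 2"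
    and "is_cyclotomic_root N q"
    and "(1 - q) dvd 1"
    and "u dvd 1" and "u' dvd 1"
  shows "comod_alg_isomorphic N q u a u' a' \<longleftrightarrow>
           (a' = a \<and> (\<exists>s. s dvd 1 \<and> u' = s ^ N * u))"
proof
  assume "comod_alg_isomorphic N q u a u' a'"
  then obtain f where "comod_alg_iso N q u a u' a' f"
    unfolding comod_alg_isomorphic_def by blast
  with assms(1,3-5) show "a' = a \<and> (\<exists>s. s dvd 1 \<and> u' = s ^ N * u)"
    by (rule comod_alg_iso_imp_parameters)
next
  assume "a' = a \<and> (\<exists>s. s dvd 1 \<and> u' = s ^ N * u)"
  then obtain s t where "a' = a" "s * t = 1" "u' = s ^ N * u"
    by (metis dvdE)
  with assms(1) have "comod_alg_iso N q u a u' a' (rescale_v_g t)"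
    by (simp add: rescale_v_g_comod_alg_iso)
  then show "comod_alg_isomorphic N q u a u' a'"
    unfolding comod_alg_isomorphic_def by blast
qed

end
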